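(* Let $n\ge 2$, let $\Omega\subset\mathbb R^n$ be a bounded convex domain, and let $M>0$. Let $u\in C(\overline{\Omega})$ be convex with $u=0$ on $\partial\Omega$ and $\det D^2u\le M\operatorname{dist}^{n-2}(\cdot,\partial\Omega)$ in $\Omega$ in the sense of Aleksandrov. Then there is $C=C(\Omega,M)>0$ such that $$|u(x)|\le C\operatorname{dist}(x,\partial\Omega)\big(1+|\log\operatorname{dist}(x,\partial\Omega)|\big)\quad\text{for all }x\in\Omega.$$
   Context: For a convex function $u$ on $\Omega$, its Monge–Ampère measure is $Mu(E)=|\partial u(E)|$ for Borel $E\subset\Omega$, where $\partial u(x)=\{p\in\mathbb R^n: u(y)\ge u(x)+p\cdot(y-x)\ \forall y\in\Omega\}$. The inequality $\det D^2u\le g$ in the sense of Aleksandrov means $Mu\le g\,dx$ as Borel measures. $\operatorname{dist}(x,\partial\Omega)$ is the Euclidean distance to the boundary. *)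

theory Defs
  imports "HOL-Analysis.Analysis"
begin

definition subdiff :: "('a::euclidean_space \<Rightarrow> real) \<Rightarrow> 'a set \<Rightarrow> 'a \<Rightarrow> 'a set" where
  "subdiff u \<Omega> x = {p. \<forall>y\<in>\<Omega>. u y \<ge> u x + inner p (y - x)}"

definition MA_measure :: "('a::euclidean_space \<Rightarrow> real) \<Rightarrow> 'a set \<Rightarrow> 'a set \<Rightarrow> ennreal" where
  "MA_measure u \<Omega> E = emeasure lebesgue (\<Union>x\<in>E. subdiff u \<Omega> x)"

definition aleksandrov_det_le :: "('a::euclidean_space \<Rightarrow> real) \<Rightarrow> 'a set \<Rightarrow> ('a \<Rightarrow> real) \<Rightarrow> bool" where
  "aleksandrov_det_le u \<Omega> g \<longleftrightarrow>
     (\<forall>E. E \<in> sets borel \<and> E \<subseteq> \<Omega> \<longrightarrow>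
        MA_measure u \<Omega> E \<le> (\<integral>\<^sup>+ x\<in>E. ennreal (g x) \<partial>lebesgue))"

end

theory Submission
  imports Defs
begin

text \<open>
  Let \<open>d\<close> be the distance of \<open>x\<^sub>0\<close> to the frontier and suppose \<open>\<bar>u\<bar> \<le> m\<close> wherever the
  distance is at most \<open>2d\<close>. If \<open>\<bar>u x\<^sub>0\<bar>\<close> exceeded \<open>m/2 + C d\<close>, then every slope \<open>p\<close> in a
  column of cubes of volume \<open>\<approx> C\<^sup>n d\<^sup>n\<^sup>-\<^sup>1\<close> along the outer normal at \<open>x\<^sub>0\<close> would be a
  subgradient of \<open>u\<close> at a point where \<open>u - p \<bullet> (\<cdot> - x\<^sub>0)\<close> is minimal. Convexity and the
  bound \<open>m\<close> confine these contact points to a slab of width \<open>2d\<close> through \<open>x\<^sub>0\<close>, where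
  \<open>det D\<^sup>2u \<le> M (2d)\<^sup>n\<^sup>-\<^sup>2\<close>; so their Monge--Ampere mass is only \<open>O(M d\<^sup>n\<^sup>-\<^sup>1)\<close>, which is
  too little for large \<open>C\<close>. Iterating this estimate over the strips where the distance is
  at most \<open>D/2\<^sup>k\<close> gives \<open>\<bar>u\<bar> \<le> (k + 2) C D/2\<^sup>k\<close> there, i.e. \<open>\<bar>u x\<bar> = O(d \<bar>log d\<bar>)\<close>.
\<close>

section \<open>Distance to the frontier\<close>

lemma ball_infdist_frontier_subset:
  fixes S :: "'a::euclidean_space set"
  assumes "x \<in> S"
  shows "ball x (infdist x (frontier S)) \<subseteq> S"
proof
  fix y assume y: "y \<in> ball x (infdist x (frontier S))"
  show "y \<in> S"
  proof (rule ccontr)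
    assume "y \<notin> S"
    then obtain w where w: "w \<in> closed_segment x y" "w \<in> frontier S"
      using connected_Int_frontier[of "closed_segment x y" S] assms by auto
    have "infdist x (frontier S) \<le> dist x w" using w(2) by (rule infdist_le)
    also have "\<dots> \<le> dist x y" using w(1) by (metis dist_commute dist_in_closed_segment)
    finally show False using y by simp
  qed
qed

lemma infdist_frontier_pos:
  assumes "open S" "x \<in> S" "frontier S \<noteq> {}"
  shows "0 < infdist x (frontier S)"
proof -
  have "x \<notin> frontier S" using assms(1,2) by (simp add: frontier_def interior_open)
  then show ?thesis using infdist_pos_not_in_closed[OF frontier_closed assms(3)] by blast
qed

lemma infdist_frontier_le_of_halfspace:
  fixes S :: "'a::euclidean_space set"
  assumes "y \<in> S" "norm \<nu> = 1" "\<forall>y\<in>S. \<nu> \<bullet> (y - x) < c"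
  shows "infdist y (frontier S) \<le> c - \<nu> \<bullet> (y - x)"
proof -
  define t where "t = c - \<nu> \<bullet> (y - x)"
  have "\<nu> \<bullet> (y + t *\<^sub>R \<nu> - x) = c"
    using assms(2) by (simp add: t_def inner_add_right inner_diff_right power2_norm_eq_inner[symmetric])
  then have "y + t *\<^sub>R \<nu> \<notin> S" using assms(3) by force
  then have "y + t *\<^sub>R \<nu> \<notin> ball y (infdist y (frontier S))"
    using ball_infdist_frontier_subset[OF assms(1)] by blast
  moreover have "0 < t" using assms by (simp add: t_def)
  ultimately show ?thesis using assms(2) by (simp add: dist_norm t_def)
qed

lemma supporting_halfspace_at_infdist_frontier:
  fixes S :: "'a::euclidean_space set"
  assumes "open S" "convex S" "x \<in> S" "frontier S \<noteq> {}"
  obtains \<nu> where "norm \<nu> = 1" "\<forall>y\<in>S. \<nu> \<bullet> (y - x) < infdist x (frontier S)"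
    "\<forall>y\<in>closure S. \<nu> \<bullet> (y - x) \<le> infdist x (frontier S)"
proof -
  define d where "d = infdist x (frontier S)"
  obtain z where z: "z \<in> frontier S" "dist x z = d"
    using infdist_attains_inf[OF frontier_closed assms(4)] d_def by metis
  have "z \<notin> S" using z(1) assms(1) by (simp add: frontier_def interior_open)
  then obtain a b where ab: "a \<noteq> 0" "\<forall>y\<in>S. a \<bullet> y \<le> b" "a \<bullet> z \<ge> b"
    using separating_hyperplane_sets[of S "{z}"] assms(2,3) by auto
  define \<nu> where "\<nu> = a /\<^sub>R norm a"
  have \<nu>: "norm \<nu> = 1" using ab(1) by (simp add: \<nu>_def)
  have "\<nu> \<bullet> (z - x) \<le> d"
    using norm_cauchy_schwarz[of \<nu> "z - x"] \<nu> z(2) by (simp add: dist_norm norm_minus_commute)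
  moreover have "\<nu> \<bullet> y \<le> \<nu> \<bullet> z" if "y \<in> S" for y
    using ab that by (auto simp: \<nu>_def divide_right_mono intro: order_trans)
  ultimately have le: "\<nu> \<bullet> (y - x) \<le> d" if "y \<in> S" for y
    using that by (fastforce simp: inner_diff_right)
  have lt: "\<nu> \<bullet> (y - x) < d" if y: "y \<in> S" for y
  proof -
    obtain e where e: "e > 0" "ball y e \<subseteq> S" using assms(1) y open_contains_ball by blast
    then have "y + (e/2) *\<^sub>R \<nu> \<in> S" using \<nu> by (auto simp: dist_norm)
    then have "\<nu> \<bullet> (y + (e/2) *\<^sub>R \<nu> - x) \<le> d" by (rule le)
    then show ?thesis using \<nu> e(1)
      by (simp add: inner_add_right inner_diff_right power2_norm_eq_inner[symmetric])
  qed
  have "closure S \<subseteq> {y. \<nu> \<bullet> y \<le> d + \<nu> \<bullet> x}"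
  proof (intro closure_minimal closed_halfspace_le subsetI CollectI)
    show "\<nu> \<bullet> y \<le> d + \<nu> \<bullet> x" if "y \<in> S" for y
      using le[OF that] by (simp add: inner_diff_right)
  qed
  then show ?thesis using that \<nu> lt by (force simp: d_def inner_diff_right)
qed

lemma ray_meets_frontier:
  fixes S :: "'a::euclidean_space set"
  assumes "bounded S" "x \<in> S" "v \<noteq> 0"
  obtains s where "0 \<le> s" "x + s *\<^sub>R v \<in> frontier S"
proof -
  obtain B where B: "\<forall>y\<in>S. norm y \<le> B" using assms(1) by (auto simp: bounded_iff)
  define c where "c = (B + norm x + 1) / norm v"
  have "0 \<le> B" using B assms(2) norm_ge_zero order_trans by blast
  then have pos: "0 < B + norm x + 1" using norm_ge_zero[of x] by linarith
  then have c: "0 < c" using assms(3) by (simp add: c_def)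
  have "norm (x + c *\<^sub>R v) \<ge> norm (c *\<^sub>R v) - norm x"
    using norm_triangle_ineq2[of "c *\<^sub>R v" "- x"] by (simp add: add.commute)
  moreover have "norm (c *\<^sub>R v) = B + norm x + 1" using pos assms(3) by (simp add: c_def)
  ultimately have "x + c *\<^sub>R v \<notin> S" using B by force
  then obtain w where w: "w \<in> closed_segment x (x + c *\<^sub>R v)" "w \<in> frontier S"
    using connected_Int_frontier[of "closed_segment x (x + c *\<^sub>R v)" S] assms(2) by auto
  then obtain \<mu> where "0 \<le> \<mu>" "w = x + (\<mu> * c) *\<^sub>R v"
    by (auto simp: closed_segment_def algebra_simps)
  then show ?thesis using that[of "\<mu> * c"] c w(2) by simp
qed

section \<open>Convex functions up to the frontier\<close>

lemma convex_on_closure: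
  fixes f :: "'a::euclidean_space \<Rightarrow> real"
  assumes "convex_on S f" "interior S \<noteq> {}" "continuous_on (closure S) f"
  shows "convex_on (closure S) f"
proof (rule convex_onI)
  have cvx: "convex S" using assms(1) by (simp add: convex_on_def)
  then show "convex (closure S)" by (rule convex_closure)
  fix t :: real and x y assume t: "0 < t" "t < 1" and x: "x \<in> closure S" and y: "y \<in> closure S"
  obtain c where c: "c \<in> interior S" using assms(2) by blast
  define shrink where "shrink e z = z - e *\<^sub>R (z - c)" for e :: real and z
  define w where "w = (1 - t) *\<^sub>R x + t *\<^sub>R y"
  have w: "w \<in> closure S" using convexD_alt[OF convex_closure[OF cvx] x y] t by (simp add: w_def)
  have shrink_in: "\<forall>\<^sub>F e in at_right 0. shrink e z \<in> S" if "z \<in> closure S" for z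
    using eventually_at_right_real[OF zero_less_one]
    by eventually_elim
      (use mem_interior_closure_convex_shrink[OF cvx c that] interior_subset in \<open>force simp: shrink_def\<close>)
  have f_shrink: "((\<lambda>e. f (shrink e z)) \<longlongrightarrow> f z) (at_right 0)" if "z \<in> closure S" for z
  proof (rule continuous_on_tendsto_compose[OF assms(3) _ that])
    show "((\<lambda>e. shrink e z) \<longlongrightarrow> z) (at_right 0)" unfolding shrink_def by (auto intro!: tendsto_eq_intros)
    show "\<forall>\<^sub>F e in at_right 0. shrink e z \<in> closure S"
      using shrink_in[OF that] by eventually_elim (use closure_subset in blast)
  qed
  have "\<forall>\<^sub>F e in at_right 0. f (shrink e w) \<le> (1 - t) * f (shrink e x) + t * f (shrink e y)"
    using shrink_in[OF x] shrink_in[OF y]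
  proof eventually_elim
    case (elim e)
    have "shrink e w = (1 - t) *\<^sub>R shrink e x + t *\<^sub>R shrink e y"
      by (simp add: shrink_def w_def algebra_simps)
    then show ?case using convex_onD[OF assms(1), of t] elim t by simp
  qed
  from tendsto_le[OF _ tendsto_add[OF tendsto_mult_left[OF f_shrink[OF x]] tendsto_mult_left[OF f_shrink[OF y]]]
      f_shrink[OF w] this]
  show "f ((1 - t) *\<^sub>R x + t *\<^sub>R y) \<le> (1 - t) * f x + t * f y" by (simp add: w_def)
qed

lemma convex_on_nonpos_if_zero_on_frontier:
  fixes S :: "'a::euclidean_space set"
  assumes "open S" "bounded S" "convex_on (closure S) f" "\<forall>z\<in>frontier S. f z = 0" "x \<in> S"
  shows "f x \<le> 0"
proof -
  have notin: "z \<notin> S" if "z \<in> frontier S" for z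
    using that assms(1) by (simp add: frontier_def interior_open)
  obtain z where z: "z \<in> frontier S"
    using assms(2,5) frontier_not_empty not_bounded_UNIV by blast
  then have "x - z \<noteq> 0" using notin assms(5) by auto
  then obtain s where s: "0 \<le> s" "x + s *\<^sub>R (x - z) \<in> frontier S"
    using ray_meets_frontier[OF assms(2,5)] by blast
  define w where "w = x + s *\<^sub>R (x - z)"
  define t where "t = s / (1 + s)"
  have "(1 + s) *\<^sub>R ((1 - t) *\<^sub>R w + t *\<^sub>R z) = (1 + s) *\<^sub>R x"
    using s(1) by (simp add: t_def w_def algebra_simps divide_simps)
  then have "x = (1 - t) *\<^sub>R w + t *\<^sub>R z" using s(1) by simp
  moreover have "w \<in> closure S" "z \<in> closure S" using s(2) z by (auto simp: w_def frontier_def)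
  moreover have "0 \<le> t" "t \<le> 1" using s(1) by (auto simp: t_def)
  ultimately have "f x \<le> (1 - t) * f w + t * f z" using convex_onD[OF assms(3)] by simp
  then show ?thesis using assms(4) s(2) z by (simp add: w_def)
qed

lemma norm_subgradient_le:
  fixes f :: "'a::euclidean_space \<Rightarrow> real"
  assumes p: "p \<in> subdiff f S x" and \<epsilon>: "0 < \<epsilon>" "ball x \<epsilon> \<subseteq> S" and U: "\<forall>y\<in>S. \<bar>f y\<bar> \<le> U"
  shows "norm p \<le> 4 * U / \<epsilon>"
proof (cases "p = 0")
  case True
  have "x \<in> S" using \<epsilon> by auto
  then have "0 \<le> U" using U abs_ge_zero order_trans by blast
  then show ?thesis using True \<epsilon>(1) by simp
next
  case False
  define y where "y = x + (\<epsilon> / 2 / norm p) *\<^sub>R p"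
  have "dist x y < \<epsilon>" using False \<epsilon>(1) by (simp add: y_def dist_norm)
  then have "x \<in> S" "y \<in> S" using \<epsilon> by auto
  then have "f x + p \<bullet> (y - x) \<le> f y" using p by (simp add: subdiff_def)
  moreover have "p \<bullet> (y - x) = \<epsilon> / 2 * norm p"
    using False by (simp add: y_def power2_norm_eq_inner[symmetric] power2_eq_square)
  moreover have "\<bar>f y\<bar> \<le> U" "\<bar>f x\<bar> \<le> U" using U \<open>x \<in> S\<close> \<open>y \<in> S\<close> by auto
  ultimately have "\<epsilon> / 2 * norm p \<le> 2 * U" by linarith
  then show ?thesis using \<epsilon>(1) by (simp add: field_simps)
qed

lemma compact_projection_sublevel:
  fixes g :: "'a::t2_space \<times> 'b::t2_space \<Rightarrow> real"
  assumes "compact A" "compact T" "continuous_on (A \<times> T) g"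
  shows "compact {y \<in> A. \<exists>p\<in>T. g (y, p) \<le> c}"
proof -
  have "closed ((A \<times> T) \<inter> g -` {..c})"
    using assms by (intro continuous_closed_preimage) (auto simp: closed_Times compact_imp_closed)
  then have "compact ((A \<times> T) \<inter> ((A \<times> T) \<inter> g -` {..c}))"
    using compact_Times[OF assms(1,2)] by (rule compact_Int_closed[rotated])
  then have "compact (fst ` ((A \<times> T) \<inter> g -` {..c}))"
    by (simp add: Int_absorb1 compact_continuous_image continuous_on_fst)
  moreover have "fst ` ((A \<times> T) \<inter> g -` {..c}) = {y \<in> A. \<exists>p\<in>T. g (y, p) \<le> c}" by force
  ultimately show ?thesis by simp
qed

section \<open>Cubes and slabs\<close>

lemma cball_subset_cube:
  fixes c :: "'a::euclidean_space" and r :: real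
  shows "cball c r \<subseteq> cbox (c - r *\<^sub>R One) (c + r *\<^sub>R One)"
proof
  fix y assume "y \<in> cball c r"
  then have "norm (y - c) \<le> r" by (simp add: dist_norm norm_minus_commute)
  then have "\<bar>(y - c) \<bullet> i\<bar> \<le> r" if "i \<in> Basis" for i
    using Basis_le_norm[OF that, of "y - c"] by simp
  then show "y \<in> cbox (c - r *\<^sub>R One) (c + r *\<^sub>R One)"
    by (force simp: mem_box inner_diff_left inner_add_left abs_le_iff)
qed

lemma emeasure_cube:
  fixes c :: "'a::euclidean_space" and r :: real
  assumes "0 \<le> r"
  shows "emeasure lebesgue (cbox (c - r *\<^sub>R One) (c + r *\<^sub>R One)) = ennreal ((2 * r) ^ DIM('a))"
    and "emeasure lebesgue (box (c - r *\<^sub>R One) (c + r *\<^sub>R One)) = ennreal ((2 * r) ^ DIM('a))"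
  using assms by (simp_all add: emeasure_lborel_cbox_eq emeasure_lborel_box_eq inner_diff_left
      inner_add_left algebra_simps prod_constant)

lemma norm_le_of_mem_cube:
  fixes c :: "'a::euclidean_space" and r :: real
  assumes "p \<in> cbox (c - r *\<^sub>R One) (c + r *\<^sub>R One)"
  shows "norm (p - c) \<le> DIM('a) * r"
proof -
  have "\<bar>(p - c) \<bullet> i\<bar> \<le> r" if "i \<in> Basis" for i
    using assms that by (auto simp: mem_box inner_diff_left inner_add_left abs_le_iff)
  then have "(\<Sum>i\<in>Basis. \<bar>(p - c) \<bullet> i\<bar>) \<le> (\<Sum>i\<in>(Basis::'a set). r)" by (intro sum_mono) auto
  then show ?thesis using norm_le_l1[of "p - c"] by simp
qed

lemma disjoint_open_cubes:
  fixes c c' :: "'a::euclidean_space" and r :: real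
  assumes "2 * DIM('a) * r \<le> norm (c - c')"
  shows "box (c - r *\<^sub>R One) (c + r *\<^sub>R One) \<inter> box (c' - r *\<^sub>R One) (c' + r *\<^sub>R One) = {}"
proof (rule ccontr)
  assume "\<not> ?thesis"
  then obtain p where p: "p \<in> box (c - r *\<^sub>R One) (c + r *\<^sub>R One)" "p \<in> box (c' - r *\<^sub>R One) (c' + r *\<^sub>R One)"
    by blast
  have "\<bar>(c - c') \<bullet> i\<bar> < 2 * r" if "i \<in> Basis" for i
  proof -
    have "c \<bullet> i - r < p \<bullet> i" "p \<bullet> i < c \<bullet> i + r" "c' \<bullet> i - r < p \<bullet> i" "p \<bullet> i < c' \<bullet> i + r"
      using p that by (auto simp: mem_box inner_diff_left inner_add_left)
    then show ?thesis by (simp add: inner_diff_left abs_less_iff)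
  qed
  then have "(\<Sum>i\<in>Basis. \<bar>(c - c') \<bullet> i\<bar>) < (\<Sum>i\<in>(Basis::'a set). 2 * r)"
    by (intro sum_strict_mono) auto
  then have "norm (c - c') < DIM('a) * (2 * r)" using norm_le_l1[of "c - c'"] by simp
  then show False using assms by (simp add: algebra_simps)
qed

lemma unit_vector_component_bounds:
  fixes p \<nu> :: "'a::real_inner"
  assumes "norm \<nu> = 1" "norm (p - c *\<^sub>R \<nu>) \<le> b"
  shows "\<bar>p \<bullet> \<nu> - c\<bar> \<le> b" "norm (p - (p \<bullet> \<nu>) *\<^sub>R \<nu>) \<le> b"
proof -
  define w where "w = p - c *\<^sub>R \<nu>"
  have \<nu>\<nu>: "\<nu> \<bullet> \<nu> = 1" using assms(1) by (simp add: dot_square_norm)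
  have "\<bar>w \<bullet> \<nu>\<bar> \<le> norm w" using Cauchy_Schwarz_ineq2[of w \<nu>] assms(1) by simp
  then show "\<bar>p \<bullet> \<nu> - c\<bar> \<le> b" using assms(2) \<nu>\<nu> by (simp add: w_def inner_diff_left)
  have "(norm (w - (w \<bullet> \<nu>) *\<^sub>R \<nu>))\<^sup>2 = w \<bullet> w - (w \<bullet> \<nu>)\<^sup>2"
    unfolding power2_norm_eq_inner
    by (simp add: inner_diff_left inner_diff_right \<nu>\<nu> inner_commute power2_eq_square)
  also have "\<dots> \<le> (norm w)\<^sup>2" by (simp add: power2_norm_eq_inner)
  finally have "(norm (w - (w \<bullet> \<nu>) *\<^sub>R \<nu>))\<^sup>2 \<le> (norm w)\<^sup>2" .
  then have "norm (w - (w \<bullet> \<nu>) *\<^sub>R \<nu>) \<le> norm w" by (rule power2_le_imp_le) simp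
  moreover have "p - (p \<bullet> \<nu>) *\<^sub>R \<nu> = w - (w \<bullet> \<nu>) *\<^sub>R \<nu>"
    by (simp add: w_def inner_diff_left \<nu>\<nu> algebra_simps)
  ultimately have "norm (p - (p \<bullet> \<nu>) *\<^sub>R \<nu>) \<le> norm w" by simp
  then show "norm (p - (p \<bullet> \<nu>) *\<^sub>R \<nu>) \<le> b" using assms(2) by (simp add: w_def)
qed

definition cube_column :: "'a::euclidean_space \<Rightarrow> real \<Rightarrow> real \<Rightarrow> nat \<Rightarrow> 'a set" where
  "cube_column \<nu> a b N = (\<Union>j<N. cbox ((a + (2 * real j + 1) * b) *\<^sub>R \<nu> - (b / DIM('a)) *\<^sub>R One)
                                        ((a + (2 * real j + 1) * b) *\<^sub>R \<nu> + (b / DIM('a)) *\<^sub>R One))"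

lemma compact_cube_column: "compact (cube_column \<nu> a b N)"
  unfolding cube_column_def by (intro compact_UN) auto

lemma mem_cube_column_bounds:
  fixes \<nu> :: "'a::euclidean_space"
  assumes "norm \<nu> = 1" "p \<in> cube_column \<nu> a b N"
  shows "a \<le> p \<bullet> \<nu>" "p \<bullet> \<nu> \<le> a + 2 * b * N" "norm (p - (p \<bullet> \<nu>) *\<^sub>R \<nu>) \<le> b"
proof -
  obtain j where j: "j < N"
    "p \<in> cbox ((a + (2 * real j + 1) * b) *\<^sub>R \<nu> - (b / DIM('a)) *\<^sub>R One)
                ((a + (2 * real j + 1) * b) *\<^sub>R \<nu> + (b / DIM('a)) *\<^sub>R One)"
    using assms(2) by (auto simp: cube_column_def)
  then have "norm (p - (a + (2 * real j + 1) * b) *\<^sub>R \<nu>) \<le> b"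
    using norm_le_of_mem_cube[OF j(2)] by simp
  note bounds = unit_vector_component_bounds[OF assms(1) this]
  from bounds(1) have "b \<ge> 0" by linarith
  moreover have "real j + 1 \<le> real N" using j(1) by linarith
  ultimately have "(2 * real j + 2) * b \<le> 2 * b * N"
    using mult_right_mono[of "real j + 1" "real N" b] by (simp add: algebra_simps)
  moreover have "0 \<le> b * real j" using \<open>b \<ge> 0\<close> by simp
  moreover have "a + 2 * (b * real j) \<le> p \<bullet> \<nu>" "p \<bullet> \<nu> \<le> a + (2 * real j + 2) * b"
    using bounds(1) by (auto simp: abs_le_iff algebra_simps)
  ultimately show "a \<le> p \<bullet> \<nu>" "p \<bullet> \<nu> \<le> a + 2 * b * N" by linarith+
  show "norm (p - (p \<bullet> \<nu>) *\<^sub>R \<nu>) \<le> b" by (rule bounds(2))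
qed

lemma emeasure_cube_column_ge:
  fixes \<nu> :: "'a::euclidean_space"
  assumes "norm \<nu> = 1" "0 < b"
  shows "ennreal (N * (2 * b / DIM('a)) ^ DIM('a)) \<le> emeasure lebesgue (cube_column \<nu> a b N)"
proof -
  define c where "c j = (a + (2 * real j + 1) * b) *\<^sub>R \<nu>" for j :: nat
  define r where "r = b / DIM('a)"
  define Q where "Q j = box (c j - r *\<^sub>R One) (c j + r *\<^sub>R One)" for j
  have r: "0 < r" using assms(2) by (simp add: r_def)
  have "disjoint_family_on Q {..<N}"
  proof (unfold disjoint_family_on_def, intro ballI impI)
    fix i j assume "i \<in> {..<N}" "j \<in> {..<N}" "i \<noteq> j"
    then have "1 \<le> \<bar>real i - real j\<bar>" by linarith
    then have "2 * b \<le> 2 * b * \<bar>real i - real j\<bar>" using assms(2) by simp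
    also have "\<dots> = norm (c i - c j)"
    proof -
      have "c i - c j = (2 * b * (real i - real j)) *\<^sub>R \<nu>"
        unfolding c_def scaleR_diff_left[symmetric] by (simp add: algebra_simps)
      then show ?thesis using assms by (simp add: abs_mult)
    qed
    finally show "Q i \<inter> Q j = {}"
      unfolding Q_def by (intro disjoint_open_cubes) (simp add: r_def)
  qed
  then have "emeasure lebesgue (\<Union>j<N. Q j) = (\<Sum>j<N. emeasure lebesgue (Q j))"
    by (intro sum_emeasure[symmetric]) (auto simp: Q_def[abs_def])
  also have "\<dots> = (\<Sum>j<N. ennreal ((2 * r) ^ DIM('a)))"
  proof (rule sum.cong[OF refl])
    show "emeasure lebesgue (Q j) = ennreal ((2 * r) ^ DIM('a))" for j
      unfolding Q_def by (rule emeasure_cube(2)) (use r in simp)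
  qed
  also have "\<dots> = ennreal (N * (2 * r) ^ DIM('a))" using r by (subst sum_ennreal) auto
  finally have "emeasure lebesgue (\<Union>j<N. Q j) = ennreal (N * (2 * b / DIM('a)) ^ DIM('a))"
    by (simp add: r_def)
  moreover have "(\<Union>j<N. Q j) \<subseteq> cube_column \<nu> a b N"
    unfolding Q_def cube_column_def c_def r_def using box_subset_cbox by fast
  moreover have "cube_column \<nu> a b N \<in> sets lebesgue"
    using lmeasurable_compact[OF compact_cube_column] by (rule fmeasurableD)
  ultimately show ?thesis using emeasure_mono by metis
qed

lemma disjoint_translates_of_slab:
  fixes \<nu> :: "'a::real_inner"
  assumes "norm \<nu> = 1" "0 < w" "A \<subseteq> {y. c \<le> \<nu> \<bullet> y \<and> \<nu> \<bullet> y < c + w}"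
  shows "disjoint_family (\<lambda>j::nat. (+) ((w * j) *\<^sub>R \<nu>) ` A)"
proof (unfold disjoint_family_on_def, intro ballI impI)
  fix i j :: nat assume "i \<noteq> j"
  show "(+) ((w * i) *\<^sub>R \<nu>) ` A \<inter> (+) ((w * j) *\<^sub>R \<nu>) ` A = {}"
  proof (rule ccontr)
    assume "\<not> ?thesis"
    then obtain y1 y2 where y: "y1 \<in> A" "y2 \<in> A" "(w * i) *\<^sub>R \<nu> + y1 = (w * j) *\<^sub>R \<nu> + y2"
      by auto
    have "\<nu> \<bullet> \<nu> = 1" using assms(1) by (simp add: dot_square_norm)
    then have "w * i + \<nu> \<bullet> y1 = w * j + \<nu> \<bullet> y2"
      using arg_cong[OF y(3), of "inner \<nu>"] by (simp add: inner_add_right)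
    moreover have "c \<le> \<nu> \<bullet> y1" "\<nu> \<bullet> y1 < c + w" "c \<le> \<nu> \<bullet> y2" "\<nu> \<bullet> y2 < c + w"
      using y(1,2) assms(3) by auto
    ultimately have "w * real i < w * (real j + 1)" "w * real j < w * (real i + 1)"
      by (simp_all add: algebra_simps)
    then have "\<bar>real i - real j\<bar> < 1" using assms(2) by (simp add: abs_less_iff)
    then show False using \<open>i \<noteq> j\<close> by linarith
  qed
qed

lemma emeasure_disjoint_translates_le:
  fixes A :: "'a::euclidean_space set"
  assumes "A \<in> sets lebesgue" "disjoint_family_on (\<lambda>j. (+) (t j) ` A) {..<N}"
    and "(\<Union>j<N. (+) (t j) ` A) \<subseteq> B" "B \<in> sets lebesgue"
  shows "of_nat N * emeasure lebesgue A \<le> emeasure lebesgue B"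
proof -
  have "of_nat N * emeasure lebesgue A = (\<Sum>j<N. emeasure lebesgue ((+) (t j) ` A))"
    using emeasure_lebesgue_affine[of 1 "t j" A for j] by (simp add: add.commute)
  also have "\<dots> = emeasure lebesgue (\<Union>j<N. (+) (t j) ` A)"
    using assms(1,2) by (intro sum_emeasure) (auto simp: lebesgue_sets_translation)
  also have "\<dots> \<le> emeasure lebesgue B" using assms(3,4) by (rule emeasure_mono)
  finally show ?thesis .
qed

lemma nat_floor_bounds:
  fixes x :: real
  assumes "1 \<le> x"
  shows "1 \<le> real (nat \<lfloor>x\<rfloor>)" "real (nat \<lfloor>x\<rfloor>) \<le> x" "x / 2 \<le> real (nat \<lfloor>x\<rfloor>)"
proof -
  have "real (nat \<lfloor>x\<rfloor>) = of_int \<lfloor>x\<rfloor>" "(1::real) \<le> of_int \<lfloor>x\<rfloor>" using assms by simp_all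
  moreover have "of_int \<lfloor>x\<rfloor> \<le> x" "x < of_int \<lfloor>x\<rfloor> + 1" by linarith+
  ultimately show "1 \<le> real (nat \<lfloor>x\<rfloor>)" "real (nat \<lfloor>x\<rfloor>) \<le> x" "x / 2 \<le> real (nat \<lfloor>x\<rfloor>)"
    by linarith+
qed

lemma mem_cube_column_slopes:
  fixes \<nu> :: "'a::euclidean_space"
  assumes "norm \<nu> = 1" "0 < d" "d \<le> D" "0 < C"
    and "p \<in> cube_column \<nu> a (C * d / (4 * D)) (nat \<lfloor>D / d\<rfloor>)"
  shows "a \<le> p \<bullet> \<nu>" "p \<bullet> \<nu> \<le> a + C / 2"
    and "norm w \<le> D \<Longrightarrow> (p - (p \<bullet> \<nu>) *\<^sub>R \<nu>) \<bullet> w \<le> C * d / 4"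
proof -
  define b where "b = C * d / (4 * D)"
  note bounds = mem_cube_column_bounds[OF assms(1,5)[folded b_def]]
  have "0 < b" using assms(2-4) by (simp add: b_def)
  have "1 \<le> D / d" using assms(2,3) by simp
  then have "2 * b * nat \<lfloor>D / d\<rfloor> \<le> 2 * b * (D / d)"
    using nat_floor_bounds(2) \<open>0 < b\<close> by (intro mult_left_mono) auto
  also have "\<dots> = C / 2" using assms(2,3) by (simp add: b_def)
  finally show "a \<le> p \<bullet> \<nu>" "p \<bullet> \<nu> \<le> a + C / 2" using bounds(1,2) by linarith+
  assume "norm w \<le> D"
  then have "norm (p - (p \<bullet> \<nu>) *\<^sub>R \<nu>) * norm w \<le> b * D"
    using bounds(3) \<open>0 < b\<close> by (intro mult_mono) auto
  also have "\<dots> = C * d / 4" using assms(2,3) by (simp add: b_def)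
  finally show "(p - (p \<bullet> \<nu>) *\<^sub>R \<nu>) \<bullet> w \<le> C * d / 4"
    using norm_cauchy_schwarz[of "p - (p \<bullet> \<nu>) *\<^sub>R \<nu>" w] by linarith
qed

text \<open>About \<open>R / d\<close> disjoint translates of the slab piece by multiples of \<open>2 d \<nu>\<close> fit into
  the cube of side \<open>6 R\<close> around \<open>x0\<close>.\<close>
lemma emeasure_slab_ball_le:
  fixes x0 \<nu> :: "'a::euclidean_space"
  assumes "norm \<nu> = 1" "0 < d" "d \<le> R"
    and "S \<subseteq> {y. - d \<le> \<nu> \<bullet> (y - x0) \<and> \<nu> \<bullet> (y - x0) < d} \<inter> cball x0 R"
  shows "emeasure lebesgue S \<le> ennreal ((6 * R) ^ DIM('a) * (2 * d / R))"
proof -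
  define A where "A = {y. - d \<le> \<nu> \<bullet> (y - x0) \<and> \<nu> \<bullet> (y - x0) < d} \<inter> cball x0 R"
  define N where "N = nat \<lfloor>R / d\<rfloor>"
  define At where "At j = (+) ((2 * d * j) *\<^sub>R \<nu>) ` A" for j :: nat
  have R: "0 < R" using assms(2,3) by simp
  have "1 \<le> R / d" using assms(2,3) by simp
  note N = nat_floor_bounds[OF this, folded N_def]
  have A: "A \<in> lmeasurable"
  proof (rule bounded_set_imp_lmeasurable)
    have "A = {y. \<nu> \<bullet> x0 - d \<le> \<nu> \<bullet> y} \<inter> {y. \<nu> \<bullet> y < \<nu> \<bullet> x0 + d} \<inter> cball x0 R"
      by (auto simp: A_def inner_diff_right)
    then show "A \<in> sets lebesgue"
      by (simp add: closed_halfspace_ge open_halfspace_lt borel_closed borel_open sets.Int)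
  qed (auto simp: A_def)
  have "A \<subseteq> {y. \<nu> \<bullet> x0 - d \<le> \<nu> \<bullet> y \<and> \<nu> \<bullet> y < \<nu> \<bullet> x0 - d + 2 * d}"
    by (auto simp: A_def inner_diff_right)
  then have "disjoint_family At"
    unfolding At_def using assms(2) by (intro disjoint_translates_of_slab[OF assms(1)]) auto
  then have "disjoint_family_on At {..<N}" by (rule disjoint_family_on_mono[rotated]) auto
  have "(\<Union>j<N. At j) \<subseteq> cball x0 (3 * R)"
  proof
    fix y assume "y \<in> (\<Union>j<N. At j)"
    then obtain j y0 where j: "j < N" "y0 \<in> A" "y = (2 * d * j) *\<^sub>R \<nu> + y0"
      by (auto simp: At_def)
    have "real j \<le> R / d" using j(1) N(2) by linarith
    then have "d * j \<le> R" using assms(2) by (simp add: field_simps)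
    then have "norm ((2 * d * j) *\<^sub>R \<nu>) \<le> 2 * R" using assms(1,2) by simp
    moreover have "dist x0 y0 \<le> R" using j(2) by (simp add: A_def)
    ultimately show "y \<in> cball x0 (3 * R)"
      using dist_triangle[of x0 y y0] j(3) by (simp add: dist_norm)
  qed
  then have "of_nat N * emeasure lebesgue A
      \<le> emeasure lebesgue (cbox (x0 - (3 * R) *\<^sub>R One) (x0 + (3 * R) *\<^sub>R One))"
    using cball_subset_cube A \<open>disjoint_family_on At {..<N}\<close>
    by (intro emeasure_disjoint_translates_le[of A _ N]) (auto simp: At_def[abs_def])
  also have "\<dots> = ennreal ((6 * R) ^ DIM('a))" using emeasure_cube(1)[of "3 * R" x0] R by simp
  finally have "ennreal (N * measure lebesgue A) \<le> ennreal ((6 * R) ^ DIM('a))"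
    using A by (simp add: emeasure_eq_measure2 ennreal_mult' ennreal_of_nat_eq_real_of_nat)
  then have "N * measure lebesgue A \<le> (6 * R) ^ DIM('a)" using R by (simp add: ennreal_le_iff)
  then have "measure lebesgue A \<le> (6 * R) ^ DIM('a) / N" using N(1) by (simp add: field_simps)
  also have "\<dots> \<le> (6 * R) ^ DIM('a) * (2 * d / R)"
    using N(3) R assms(2) by (simp add: divide_simps algebra_simps)
  finally have "emeasure lebesgue A \<le> ennreal ((6 * R) ^ DIM('a) * (2 * d / R))"
    using A by (simp add: emeasure_eq_measure2 ennreal_leI del: power_mult_distrib)
  moreover have "emeasure lebesgue S \<le> emeasure lebesgue A"
    using assms(4) A by (intro emeasure_mono) (auto simp: A_def)
  ultimately show ?thesis by order
qed

section \<open>Convex functions vanishing on the frontier\<close>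

locale convex_zero_on_frontier =
  fixes \<Omega> :: "'a::euclidean_space set" and u :: "'a \<Rightarrow> real"
  assumes open_domain: "open \<Omega>" and bounded_domain: "bounded \<Omega>" and nonempty_domain: "\<Omega> \<noteq> {}"
    and continuous: "continuous_on (closure \<Omega>) u" and convex: "convex_on \<Omega> u"
    and zero_on_frontier: "\<forall>z\<in>frontier \<Omega>. u z = 0"
begin

abbreviation bdist :: "'a \<Rightarrow> real" where
  "bdist x \<equiv> infdist x (frontier \<Omega>)"

lemma convex_domain: "convex \<Omega>"
  using convex by (simp add: convex_on_def)

lemma frontier_nonempty: "frontier \<Omega> \<noteq> {}"
  using nonempty_domain bounded_domain frontier_not_empty not_bounded_UNIV by blast

lemma closure_domain: "closure \<Omega> = \<Omega> \<union> frontier \<Omega>"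
  using open_domain closure_subset by (auto simp: frontier_def interior_open)

lemma bdist_pos: "x \<in> \<Omega> \<Longrightarrow> 0 < bdist x"
  using infdist_frontier_pos[OF open_domain _ frontier_nonempty] .

lemma nearest_frontier_point:
  obtains z where "z \<in> frontier \<Omega>" "dist x z = bdist x"
  using infdist_attains_inf[OF frontier_closed frontier_nonempty] by metis

lemma convex_on_closure_domain: "convex_on (closure \<Omega>) u"
  using convex_on_closure[OF convex _ continuous] nonempty_domain open_domain
  by (simp add: interior_open)

lemma nonpos: "x \<in> \<Omega> \<Longrightarrow> u x \<le> 0"
  using convex_on_nonpos_if_zero_on_frontier[OF open_domain bounded_domain
      convex_on_closure_domain zero_on_frontier] .

text \<open>Along the segment from \<open>y\<close> to its nearest frontier point, convexity and \<open>u = 0\<close> on the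
  frontier make \<open>\<bar>u\<bar>\<close> grow at most linearly in the distance to the frontier.\<close>
lemma abs_le_of_bound_near_frontier:
  assumes "0 \<le> m" "0 < s" and near: "\<forall>y\<in>\<Omega>. bdist y \<le> s \<longrightarrow> \<bar>u y\<bar> \<le> m" and y: "y \<in> \<Omega>"
  shows "\<bar>u y\<bar> \<le> max m (bdist y / s * m)"
proof (cases "bdist y \<le> s")
  case True
  then show ?thesis using near y by auto
next
  case False
  define \<delta> where "\<delta> = bdist y"
  obtain z where z: "z \<in> frontier \<Omega>" "dist y z = \<delta>"
    using nearest_frontier_point \<delta>_def by metis
  define t where "t = 1 - s / \<delta>"
  have \<delta>: "s < \<delta>" using False by (simp add: \<delta>_def)
  then have t: "0 \<le> t" "t < 1" using assms(2) by (auto simp: t_def)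
  define y' where "y' = (1 - t) *\<^sub>R y + t *\<^sub>R z"
  have "y - y' = t *\<^sub>R (y - z)" "y' - z = (1 - t) *\<^sub>R (y - z)" by (simp_all add: y'_def algebra_simps)
  then have "dist y y' = t * \<delta>" "dist y' z = (1 - t) * \<delta>" using t z(2) by (simp_all add: dist_norm)
  moreover have "t * \<delta> < \<delta>" "(1 - t) * \<delta> = s" using t \<delta> assms(2) by (simp_all add: t_def)
  ultimately have "y' \<in> ball y (bdist y)" "bdist y' \<le> s"
    using infdist_le[OF z(1), of y'] by (simp_all add: \<delta>_def)
  then have "y' \<in> \<Omega>" "bdist y' \<le> s" using ball_infdist_frontier_subset[OF y] by blast+
  then have "\<bar>u y'\<bar> \<le> m" using near by blast
  have "u y' \<le> (1 - t) * u y + t * u z"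
    unfolding y'_def using convex_onD[OF convex_on_closure_domain] y z closure_domain t by simp
  then have "u y' \<le> (1 - t) * u y" using zero_on_frontier z(1) by simp
  then have "(1 - t) * \<bar>u y\<bar> \<le> m"
    using \<open>\<bar>u y'\<bar> \<le> m\<close> nonpos[OF y] nonpos[OF \<open>y' \<in> \<Omega>\<close>] t by (simp add: abs_if split: if_splits)
  then have "\<bar>u y\<bar> \<le> m / (1 - t)" using t by (simp add: field_simps)
  also have "\<dots> = bdist y / s * m" using \<delta> assms(2) by (simp add: t_def \<delta>_def field_simps)
  finally show ?thesis by simp
qed

lemma compact_subdiff_image:
  assumes "compact K" "K \<subseteq> \<Omega>"
  shows "compact (\<Union>x\<in>K. subdiff u \<Omega> x)"
proof -
  obtain \<epsilon> where \<epsilon>: "0 < \<epsilon>" "(\<Union>x\<in>K. ball x \<epsilon>) \<subseteq> \<Omega>"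
    using compact_subset_open_imp_ball_epsilon_subset[OF assms(1) open_domain assms(2)] by metis
  have "compact (u ` closure \<Omega>)"
    using compact_continuous_image[OF continuous] bounded_domain compact_closure by blast
  then obtain U where U: "\<forall>y\<in>closure \<Omega>. \<bar>u y\<bar> \<le> U"
    by (auto simp: compact_eq_bounded_closed bounded_iff)
  define B where "B = 4 * U / \<epsilon>"
  have slope_bound: "norm p \<le> B" if "x \<in> K" "p \<in> subdiff u \<Omega> x" for x p
  proof -
    have "ball x \<epsilon> \<subseteq> \<Omega>" using \<epsilon>(2) that(1) by blast
    moreover have "\<forall>y\<in>\<Omega>. \<bar>u y\<bar> \<le> U" using U closure_subset by blast
    ultimately show ?thesis using norm_subgradient_le[OF that(2) \<epsilon>(1)] by (simp add: B_def)
  qed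
  have cont_K: "continuous_on K u"
    using continuous_on_subset[OF continuous] assms(2) closure_subset by blast
  define F where "F y = (K \<times> UNIV) \<inter> (\<lambda>(x, p). u x + p \<bullet> (y - x) - u y) -` {..0}" for y
  have "closed (F y)" for y
    unfolding F_def
  proof (rule continuous_closed_preimage)
    show "continuous_on (K \<times> UNIV) (\<lambda>(x, p). u x + p \<bullet> (y - x) - u y)"
      unfolding case_prod_unfold by (intro continuous_intros continuous_on_compose2[OF cont_K]) auto
    show "closed (K \<times> (UNIV :: 'a set))" using assms(1) compact_imp_closed closed_Times by blast
  qed auto
  then have "compact ((K \<times> cball 0 B) \<inter> (\<Inter>y\<in>\<Omega>. F y))"
    by (intro compact_Int_closed compact_Times assms(1) compact_cball closed_INT) auto
  then have "compact (snd ` ((K \<times> cball 0 B) \<inter> (\<Inter>y\<in>\<Omega>. F y)))"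
    by (intro compact_continuous_image continuous_intros)
  moreover have "snd ` ((K \<times> cball 0 B) \<inter> (\<Inter>y\<in>\<Omega>. F y)) = (\<Union>x\<in>K. subdiff u \<Omega> x)"
  proof (intro equalityI subsetI)
    fix p assume "p \<in> snd ` ((K \<times> cball 0 B) \<inter> (\<Inter>y\<in>\<Omega>. F y))"
    then obtain x where "x \<in> K" "\<forall>y\<in>\<Omega>. (x, p) \<in> F y" by force
    then show "p \<in> (\<Union>x\<in>K. subdiff u \<Omega> x)" by (auto simp: F_def subdiff_def)
  next
    fix p assume "p \<in> (\<Union>x\<in>K. subdiff u \<Omega> x)"
    then obtain x where x: "x \<in> K" "p \<in> subdiff u \<Omega> x" by blast
    then have "(x, p) \<in> (K \<times> cball 0 B) \<inter> (\<Inter>y\<in>\<Omega>. F y)"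
      using slope_bound[OF x] by (auto simp: F_def subdiff_def)
    then show "p \<in> snd ` ((K \<times> cball 0 B) \<inter> (\<Inter>y\<in>\<Omega>. F y))" by force
  qed
  ultimately show ?thesis by simp
qed

text \<open>Each slope in \<open>T\<close> is a subgradient where \<open>u - p \<bullet> (\<cdot> - x0)\<close> attains its minimum over
  \<open>closure \<Omega>\<close>; the hypothesis keeps this minimum (at most \<open>u x0\<close>) off the frontier.\<close>
lemma contact_set:
  assumes "compact T" "x0 \<in> \<Omega>"
    and below: "\<And>p z. p \<in> T \<Longrightarrow> z \<in> frontier \<Omega> \<Longrightarrow> p \<bullet> (z - x0) < - u x0"
  obtains K where "compact K" "K \<subseteq> \<Omega>" "T \<subseteq> (\<Union>y\<in>K. subdiff u \<Omega> y)"
    "\<And>y. y \<in> K \<Longrightarrow> \<exists>p\<in>T. u y - p \<bullet> (y - x0) \<le> u x0"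
proof
  define K where "K = {y \<in> closure \<Omega>. \<exists>p\<in>T. u y - p \<bullet> (y - x0) \<le> u x0}"
  show "\<exists>p\<in>T. u y - p \<bullet> (y - x0) \<le> u x0" if "y \<in> K" for y
    using that by (simp add: K_def)
  show "K \<subseteq> \<Omega>"
  proof
    fix y assume "y \<in> K"
    then obtain p where p: "y \<in> closure \<Omega>" "p \<in> T" "u y - p \<bullet> (y - x0) \<le> u x0"
      by (auto simp: K_def)
    show "y \<in> \<Omega>"
    proof (rule ccontr)
      assume "y \<notin> \<Omega>"
      then have "y \<in> frontier \<Omega>" using p(1) closure_domain by blast
      then have "u y = 0" "p \<bullet> (y - x0) < - u x0" using zero_on_frontier below[OF p(2)] by auto
      then show False using p(3) by linarith
    qed
  qed
  have compact_closure_domain: "compact (closure \<Omega>)" using bounded_domain compact_closure by blast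
  have "continuous_on (closure \<Omega> \<times> T) (\<lambda>(y, p). u y - p \<bullet> (y - x0))"
    unfolding case_prod_unfold by (intro continuous_intros continuous_on_compose2[OF continuous]) auto
  from compact_projection_sublevel[OF compact_closure_domain assms(1) this, of "u x0"]
  show "compact K" by (simp add: K_def)
  show "T \<subseteq> (\<Union>y\<in>K. subdiff u \<Omega> y)"
  proof
    fix p assume p: "p \<in> T"
    have "continuous_on (closure \<Omega>) (\<lambda>y. u y - p \<bullet> (y - x0))"
      using continuous by (intro continuous_intros)
    then obtain y where y: "y \<in> closure \<Omega>" "\<forall>y'\<in>closure \<Omega>. u y - p \<bullet> (y - x0) \<le> u y' - p \<bullet> (y' - x0)"
      using continuous_attains_inf[OF compact_closure_domain] nonempty_domain closure_subset by blast
    have "u y - p \<bullet> (y - x0) \<le> u x0 - p \<bullet> (x0 - x0)" using y(2) assms(2) closure_subset by blast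
    then have "u y - p \<bullet> (y - x0) \<le> u x0" by simp
    then have "y \<in> K" using y(1) p by (auto simp: K_def)
    moreover have "p \<in> subdiff u \<Omega> y"
      unfolding subdiff_def
    proof (intro CollectI ballI)
      fix y' assume "y' \<in> \<Omega>"
      then have "u y - p \<bullet> (y - x0) \<le> u y' - p \<bullet> (y' - x0)" using y(2) closure_subset by blast
      then show "u y + p \<bullet> (y' - y) \<le> u y'" by (simp add: inner_diff_right)
    qed
    ultimately show "p \<in> (\<Union>y\<in>K. subdiff u \<Omega> y)" by blast
  qed
qed

lemma contact_point_in_slab:
  assumes x0: "x0 \<in> \<Omega>" and \<nu>: "norm \<nu> = 1" "\<forall>y\<in>\<Omega>. \<nu> \<bullet> (y - x0) < bdist x0"
    and m: "0 \<le> m" "\<forall>y\<in>\<Omega>. bdist y \<le> 2 * bdist x0 \<longrightarrow> \<bar>u y\<bar> \<le> m"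
    and y: "y \<in> \<Omega>" "u y - p \<bullet> (y - x0) \<le> u x0"
    and p: "m / (2 * bdist x0) < p \<bullet> \<nu>"
      "(p \<bullet> \<nu>) * bdist x0 + (p - (p \<bullet> \<nu>) *\<^sub>R \<nu>) \<bullet> (y - x0) \<le> - u x0"
  shows "- bdist x0 \<le> \<nu> \<bullet> (y - x0)"
proof (rule ccontr)
  define d where "d = bdist x0"
  define \<tau> where "\<tau> = d - \<nu> \<bullet> (y - x0)"
  assume "\<not> ?thesis"
  then have \<tau>: "2 * d < \<tau>" by (simp add: \<tau>_def d_def)
  have d: "0 < d" using bdist_pos[OF x0] by (simp add: d_def)
  have "bdist y \<le> \<tau>" using infdist_frontier_le_of_halfspace[OF y(1) \<nu>] by (simp add: \<tau>_def d_def)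
  moreover have "\<bar>u y\<bar> \<le> max m (bdist y / (2 * d) * m)"
    using abs_le_of_bound_near_frontier[OF m(1) _ _ y(1), of "2 * d"] d m(2) by (simp add: d_def)
  moreover have "1 \<le> \<tau> / (2 * d)" using \<tau> d by simp
  then have "m \<le> \<tau> / (2 * d) * m" using mult_right_mono[OF _ m(1)] by fastforce
  ultimately have "\<bar>u y\<bar> \<le> \<tau> / (2 * d) * m"
    using d m(1) by (smt (verit) divide_right_mono mult_right_mono)
  moreover have "p \<bullet> (y - x0) = (p \<bullet> \<nu>) * (\<nu> \<bullet> (y - x0)) + (p - (p \<bullet> \<nu>) *\<^sub>R \<nu>) \<bullet> (y - x0)"
    by (simp add: inner_diff_left)
  then have "(p \<bullet> \<nu>) * \<tau> \<le> - u y" using y(2) p(2) by (simp add: \<tau>_def d_def algebra_simps)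
  moreover have "\<tau> / (2 * d) * m < (p \<bullet> \<nu>) * \<tau>"
    using p(1) \<tau> d by (simp add: d_def field_simps mult_strict_right_mono)
  ultimately show False by simp
qed

lemma contact_set_in_slab:
  assumes x0: "x0 \<in> \<Omega>" and \<nu>: "norm \<nu> = 1" "\<forall>y\<in>\<Omega>. \<nu> \<bullet> (y - x0) < bdist x0"
      "\<forall>y\<in>closure \<Omega>. \<nu> \<bullet> (y - x0) \<le> bdist x0"
    and m: "0 \<le> m" "\<forall>y\<in>\<Omega>. bdist y \<le> 2 * bdist x0 \<longrightarrow> \<bar>u y\<bar> \<le> m"
    and T: "compact T"
    and steep: "\<And>p. p \<in> T \<Longrightarrow> m / (2 * bdist x0) < p \<bullet> \<nu>"
    and gap: "\<And>p y. p \<in> T \<Longrightarrow> y \<in> closure \<Omega> \<Longrightarrow>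
                (p \<bullet> \<nu>) * bdist x0 + (p - (p \<bullet> \<nu>) *\<^sub>R \<nu>) \<bullet> (y - x0) < - u x0"
  obtains K where "compact K" "K \<subseteq> \<Omega>" "T \<subseteq> (\<Union>y\<in>K. subdiff u \<Omega> y)"
    "K \<subseteq> {y. - bdist x0 \<le> \<nu> \<bullet> (y - x0) \<and> \<nu> \<bullet> (y - x0) < bdist x0}"
proof -
  have split: "p \<bullet> (y - x0) = (p \<bullet> \<nu>) * (\<nu> \<bullet> (y - x0)) + (p - (p \<bullet> \<nu>) *\<^sub>R \<nu>) \<bullet> (y - x0)" for p y
    by (simp add: inner_diff_left)
  have "0 \<le> m / (2 * bdist x0)" using m(1) bdist_pos[OF x0] by simp
  then have pos: "0 < p \<bullet> \<nu>" if "p \<in> T" for p using steep[OF that] by linarith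
  have "p \<bullet> (z - x0) < - u x0" if p: "p \<in> T" and z: "z \<in> frontier \<Omega>" for p z
  proof -
    have z': "z \<in> closure \<Omega>" using z closure_domain by blast
    then have "(p \<bullet> \<nu>) * (\<nu> \<bullet> (z - x0)) \<le> (p \<bullet> \<nu>) * bdist x0"
      using \<nu>(3) pos[OF p] by (simp add: mult_left_mono)
    then show ?thesis using gap[OF p z'] split[of p z] by linarith
  qed
  then obtain K where K: "compact K" "K \<subseteq> \<Omega>" "T \<subseteq> (\<Union>y\<in>K. subdiff u \<Omega> y)"
    "\<And>y. y \<in> K \<Longrightarrow> \<exists>p\<in>T. u y - p \<bullet> (y - x0) \<le> u x0"
    using contact_set[OF T x0] by blast
  have "- bdist x0 \<le> \<nu> \<bullet> (y - x0)" if y: "y \<in> K" for y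
  proof -
    obtain p where p: "p \<in> T" "u y - p \<bullet> (y - x0) \<le> u x0" using K(4)[OF y] by blast
    have "y \<in> \<Omega>" using y K(2) by blast
    then show ?thesis
      using contact_point_in_slab[OF x0 \<nu>(1,2) m \<open>y \<in> \<Omega>\<close> p(2) steep[OF p(1)]]
        gap[OF p(1)] closure_subset by (meson less_imp_le subsetD)
  qed
  then show ?thesis using that K(1-3) \<nu>(2) by blast
qed

end
section \<open>The boundary estimate\<close>

locale MA_subsolution = convex_zero_on_frontier +
  fixes M :: real
  assumes M_nonneg: "0 \<le> M"
    and MA: "aleksandrov_det_le u \<Omega> (\<lambda>x. M * bdist x ^ (DIM('a) - 2))"
begin

lemma emeasure_subdiff_image_le:
  assumes "compact K" "K \<subseteq> \<Omega>" "\<And>y. y \<in> K \<Longrightarrow> bdist y \<le> \<delta>"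
  shows "emeasure lebesgue (\<Union>y\<in>K. subdiff u \<Omega> y) \<le> ennreal (M * \<delta> ^ (DIM('a) - 2)) * emeasure lebesgue K"
proof -
  have "emeasure lebesgue (\<Union>y\<in>K. subdiff u \<Omega> y) = MA_measure u \<Omega> K" by (simp add: MA_measure_def)
  also have "\<dots> \<le> (\<integral>\<^sup>+ y\<in>K. ennreal (M * bdist y ^ (DIM('a) - 2)) \<partial>lebesgue)"
    using MA assms(1,2) by (simp add: aleksandrov_det_le_def borel_compact)
  also have "\<dots> \<le> (\<integral>\<^sup>+ y. ennreal (M * \<delta> ^ (DIM('a) - 2)) * indicator K y \<partial>lebesgue)"
  proof (intro nn_integral_mono)
    fix y
    show "ennreal (M * bdist y ^ (DIM('a) - 2)) * indicator K y \<le> ennreal (M * \<delta> ^ (DIM('a) - 2)) * indicator K y"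
    proof (cases "y \<in> K")
      case True
      then have "bdist y ^ (DIM('a) - 2) \<le> \<delta> ^ (DIM('a) - 2)"
        using assms(3) infdist_nonneg by (intro power_mono) auto
      then show ?thesis using True M_nonneg by (simp add: ennreal_leI mult_left_mono)
    qed simp
  qed
  also have "\<dots> = ennreal (M * \<delta> ^ (DIM('a) - 2)) * emeasure lebesgue K"
    using assms(1) by (simp add: nn_integral_cmult_indicator borel_compact)
  finally show ?thesis .
qed

end
lemma slab_mass_lt_column_volume:
  fixes d D M C :: real and N n :: nat
  assumes n: "2 \<le> n" and d: "0 < d" and D: "0 < D" and M: "0 \<le> M" and N: "D / d / 2 \<le> N"
    and C: "0 < C" "2 * (2 * real n) ^ n * M * 2 ^ (n - 1) * 6 ^ n * D ^ (2 * n - 2) < C ^ n"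
  shows "M * (2 * d) ^ (n - 2) * ((6 * D) ^ n * (2 * d / D)) < N * (2 * (C * d / (4 * D)) / n) ^ n"
proof -
  obtain k where k: "n = Suc (Suc k)" using n by (metis add_2_eq_Suc le_Suc_ex)
  have n_pos: "0 < real n" using n by simp
  have lhs: "M * (2 * d) ^ (n - 2) * ((6 * D) ^ n * (2 * d / D)) = (M * 2 ^ Suc k * 6 ^ n * D ^ Suc k) * d ^ Suc k"
    using D d unfolding k by (simp add: power_mult_distrib field_simps)
  have rhs: "(D / d / 2) * (2 * (C * d / (4 * D)) / n) ^ n = (C ^ n / (2 * (2 * n) ^ n * D ^ Suc k)) * d ^ Suc k"
  proof -
    have "(2 * (C * d / (4 * D)) / n) ^ n = C ^ n * d ^ n / ((2 * n) ^ n * D ^ n)"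
      using n_pos D by (simp add: power_divide power_mult_distrib field_simps)
    moreover have "d ^ n = d * d ^ Suc k" "D ^ n = D * D ^ Suc k" using k by simp_all
    ultimately show ?thesis using D d n_pos by (simp add: field_simps)
  qed
  have "n - 1 = Suc k" "2 * n - 2 = Suc k + Suc k" using k by simp_all
  then have "2 * (2 * real n) ^ n * M * 2 ^ Suc k * 6 ^ n * (D ^ Suc k * D ^ Suc k) < C ^ n"
    using C(2) by (simp only: power_add)
  moreover have "M * 2 ^ Suc k * 6 ^ n * D ^ Suc k * (2 * (2 * real n) ^ n * D ^ Suc k)
      = 2 * (2 * real n) ^ n * M * 2 ^ Suc k * 6 ^ n * (D ^ Suc k * D ^ Suc k)"
    by (simp only: ac_simps)
  ultimately have "M * 2 ^ Suc k * 6 ^ n * D ^ Suc k * (2 * (2 * real n) ^ n * D ^ Suc k) < C ^ n"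
    by linarith
  then have "M * 2 ^ Suc k * 6 ^ n * D ^ Suc k < C ^ n / (2 * (2 * n) ^ n * D ^ Suc k)"
    using n_pos D by (simp add: field_simps)
  then have "M * (2 * d) ^ (n - 2) * ((6 * D) ^ n * (2 * d / D)) < (D / d / 2) * (2 * (C * d / (4 * D)) / n) ^ n"
    unfolding lhs rhs using d by (intro mult_strict_right_mono) auto
  also have "\<dots> \<le> N * (2 * (C * d / (4 * D)) / n) ^ n"
    using N C(1) d D n_pos by (intro mult_right_mono) auto
  finally show ?thesis .
qed

locale MA_boundary_estimate = MA_subsolution +
  fixes D C :: real
  assumes dim: "2 \<le> DIM('a)"
    and diam: "\<forall>x\<in>closure \<Omega>. \<forall>y\<in>closure \<Omega>. dist x y \<le> D"
    and C_ge_1: "1 \<le> C"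
    and C_large: "2 * (2 * real DIM('a)) ^ DIM('a) * M * 2 ^ (DIM('a) - 1) * 6 ^ DIM('a) * D ^ (2 * DIM('a) - 2)
                    < C ^ DIM('a)"
begin

lemma bdist_le_diam:
  assumes "x \<in> \<Omega>" shows "bdist x \<le> D"
proof -
  obtain z where z: "z \<in> frontier \<Omega>" "dist x z = bdist x" using nearest_frontier_point by blast
  then have "z \<in> closure \<Omega>" "x \<in> closure \<Omega>" using assms closure_domain by auto
  then show ?thesis using diam z(2) by metis
qed

lemma diam_pos: "0 < D"
proof -
  obtain x where "x \<in> \<Omega>" using nonempty_domain by blast
  then show ?thesis using bdist_pos bdist_le_diam by (meson less_le_trans)
qed

lemma emeasure_slopes_le:
  assumes x0: "x0 \<in> \<Omega>" and "compact K" "K \<subseteq> \<Omega>" "T \<subseteq> (\<Union>y\<in>K. subdiff u \<Omega> y)"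
    and \<nu>: "norm \<nu> = 1" "\<forall>y\<in>\<Omega>. \<nu> \<bullet> (y - x0) < bdist x0"
    and slab: "K \<subseteq> {y. - bdist x0 \<le> \<nu> \<bullet> (y - x0) \<and> \<nu> \<bullet> (y - x0) < bdist x0}"
  shows "emeasure lebesgue T \<le> ennreal (M * (2 * bdist x0) ^ (DIM('a) - 2) * ((6 * D) ^ DIM('a) * (2 * bdist x0 / D)))"
proof -
  define d where "d = bdist x0"
  have d: "0 < d" "d \<le> D" using bdist_pos[OF x0] bdist_le_diam[OF x0] by (simp_all add: d_def)
  have "bdist y \<le> 2 * d" if "y \<in> K" for y
  proof -
    have "bdist y \<le> d - \<nu> \<bullet> (y - x0)"
      using infdist_frontier_le_of_halfspace[OF _ \<nu>] that assms(3) by (auto simp: d_def)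
    then show ?thesis using slab that by (auto simp: d_def)
  qed
  then have "emeasure lebesgue (\<Union>y\<in>K. subdiff u \<Omega> y) \<le> ennreal (M * (2 * d) ^ (DIM('a) - 2)) * emeasure lebesgue K"
    using emeasure_subdiff_image_le[OF assms(2,3)] by blast
  moreover have "K \<subseteq> {y. - d \<le> \<nu> \<bullet> (y - x0) \<and> \<nu> \<bullet> (y - x0) < d} \<inter> cball x0 D"
  proof
    fix y assume "y \<in> K"
    then have "y \<in> \<Omega>" using assms(3) by blast
    then have "dist x0 y \<le> D" using diam x0 closure_subset by blast
    then show "y \<in> {y. - d \<le> \<nu> \<bullet> (y - x0) \<and> \<nu> \<bullet> (y - x0) < d} \<inter> cball x0 D"
      using slab \<open>y \<in> K\<close> by (auto simp: d_def)
  qed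
  then have "emeasure lebesgue K \<le> ennreal ((6 * D) ^ DIM('a) * (2 * d / D))"
    by (rule emeasure_slab_ball_le[OF \<nu>(1) d])
  ultimately have "emeasure lebesgue (\<Union>y\<in>K. subdiff u \<Omega> y)
      \<le> ennreal (M * (2 * d) ^ (DIM('a) - 2)) * ennreal ((6 * D) ^ DIM('a) * (2 * d / D))"
    by (meson mult_left_mono order_trans zero_le)
  also have "\<dots> = ennreal (M * (2 * d) ^ (DIM('a) - 2) * ((6 * D) ^ DIM('a) * (2 * d / D)))"
    by (rule ennreal_mult[symmetric]) (use M_nonneg d diam_pos in auto)
  finally have "emeasure lebesgue (\<Union>y\<in>K. subdiff u \<Omega> y)
      \<le> ennreal (M * (2 * d) ^ (DIM('a) - 2) * ((6 * D) ^ DIM('a) * (2 * d / D)))" .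
  moreover have "(\<Union>y\<in>K. subdiff u \<Omega> y) \<in> sets lebesgue"
    using lmeasurable_compact[OF compact_subdiff_image[OF assms(2,3)]] by (rule fmeasurableD)
  ultimately show ?thesis using emeasure_mono[OF assms(4)] unfolding d_def by (meson order_trans)
qed

lemma abs_le_of_strip_bound:
  assumes x0: "x0 \<in> \<Omega>" and m: "0 \<le> m" "\<forall>y\<in>\<Omega>. bdist y \<le> 2 * bdist x0 \<longrightarrow> \<bar>u y\<bar> \<le> m"
  shows "\<bar>u x0\<bar> \<le> m / 2 + C * bdist x0"
proof (rule ccontr)
  define n d h where "n = DIM('a)" and "d = bdist x0" and "h = - u x0"
  assume "\<not> ?thesis"
  then have h: "m / 2 + C * d < h" using nonpos[OF x0] by (simp add: d_def h_def)
  have d: "0 < d" "d \<le> D" using bdist_pos[OF x0] bdist_le_diam[OF x0] by (simp_all add: d_def)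
  obtain \<nu> where \<nu>: "norm \<nu> = 1" "\<forall>y\<in>\<Omega>. \<nu> \<bullet> (y - x0) < d" "\<forall>y\<in>closure \<Omega>. \<nu> \<bullet> (y - x0) \<le> d"
    using supporting_halfspace_at_infdist_frontier[OF open_domain convex_domain x0 frontier_nonempty]
    unfolding d_def by blast
  define N b where "N = nat \<lfloor>D / d\<rfloor>" and "b = C * d / (4 * D)"
  define T where "T = cube_column \<nu> (h / d - C) b N"
  have C: "0 < C" using C_ge_1 by simp
  note slope = mem_cube_column_slopes[OF \<nu>(1) d C, of _ "h / d - C", folded N_def b_def, folded T_def]
  have steep: "m / (2 * d) < p \<bullet> \<nu>" if "p \<in> T" for p
  proof -
    have "m / (2 * d) < h / d - C" using h d by (simp add: field_simps)
    then show ?thesis using slope(1)[OF that] by linarith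
  qed
  have gap: "(p \<bullet> \<nu>) * d + (p - (p \<bullet> \<nu>) *\<^sub>R \<nu>) \<bullet> (y - x0) < - u x0"
    if p: "p \<in> T" and y: "y \<in> closure \<Omega>" for p y
  proof -
    have "(p \<bullet> \<nu>) * d \<le> (h / d - C + C / 2) * d" using slope(2)[OF p] d by (simp add: mult_right_mono)
    also have "\<dots> = h - C * d / 2" using d by (simp add: field_simps)
    finally have "(p \<bullet> \<nu>) * d \<le> h - C * d / 2" .
    moreover have "norm (y - x0) \<le> D" using diam y x0 closure_subset by (metis dist_norm dist_commute subsetD)
    then have "(p - (p \<bullet> \<nu>) *\<^sub>R \<nu>) \<bullet> (y - x0) \<le> C * d / 4" by (rule slope(3)[OF p])
    moreover have "0 < C * d" using C d by simp
    ultimately show ?thesis unfolding h_def by linarith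
  qed
  obtain K where K: "compact K" "K \<subseteq> \<Omega>" "T \<subseteq> (\<Union>y\<in>K. subdiff u \<Omega> y)"
    "K \<subseteq> {y. - d \<le> \<nu> \<bullet> (y - x0) \<and> \<nu> \<bullet> (y - x0) < d}"
    using contact_set_in_slab[OF x0 \<nu>[unfolded d_def] m compact_cube_column steep[unfolded T_def d_def]
        gap[unfolded T_def d_def]]
    unfolding T_def d_def .
  have "0 < b" using C d by (simp add: b_def)
  then have "ennreal (N * (2 * b / n) ^ n) \<le> emeasure lebesgue T"
    unfolding T_def n_def by (rule emeasure_cube_column_ge[OF \<nu>(1)])
  also have "\<dots> \<le> ennreal (M * (2 * d) ^ (n - 2) * ((6 * D) ^ n * (2 * d / D)))"
    using emeasure_slopes_le[OF x0 K(1-3) \<nu>(1)] \<nu>(2) K(4) by (simp add: d_def n_def)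
  finally have "N * (2 * b / n) ^ n \<le> M * (2 * d) ^ (n - 2) * ((6 * D) ^ n * (2 * d / D))"
    using M_nonneg d diam_pos by (subst (asm) ennreal_le_iff) auto
  moreover have "M * (2 * d) ^ (n - 2) * ((6 * D) ^ n * (2 * d / D)) < N * (2 * b / n) ^ n"
    unfolding b_def n_def
    using nat_floor_bounds(3)[of "D / d", folded N_def] d
    by (intro slab_mass_lt_column_volume[OF dim d(1) diam_pos M_nonneg _ C C_large]) auto
  ultimately show False by linarith
qed

lemma abs_le_diam:
  assumes "x \<in> \<Omega>" shows "\<bar>u x\<bar> \<le> 2 * C * D"
proof -
  have "compact (closure \<Omega>)" using bounded_domain compact_closure by blast
  moreover have "continuous_on (closure \<Omega>) (\<lambda>y. \<bar>u y\<bar>)" using continuous by (intro continuous_intros)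
  moreover have "closure \<Omega> \<noteq> {}" using nonempty_domain by simp
  ultimately obtain z where z: "z \<in> closure \<Omega>" "\<forall>y\<in>closure \<Omega>. \<bar>u y\<bar> \<le> \<bar>u z\<bar>"
    using continuous_attains_sup[of "closure \<Omega>" "\<lambda>y. \<bar>u y\<bar>"] by blast
  have "\<bar>u z\<bar> \<le> 2 * C * D"
  proof (cases "z \<in> \<Omega>")
    case False
    then have "u z = 0" using z(1) closure_domain zero_on_frontier by auto
    then show ?thesis using C_ge_1 diam_pos by simp
  next
    case True
    have "\<forall>y\<in>\<Omega>. bdist y \<le> 2 * bdist z \<longrightarrow> \<bar>u y\<bar> \<le> \<bar>u z\<bar>" using z(2) closure_subset by blast
    then have "\<bar>u z\<bar> \<le> \<bar>u z\<bar> / 2 + C * bdist z" by (rule abs_le_of_strip_bound[OF True abs_ge_zero])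
    moreover have "C * bdist z \<le> C * D" using bdist_le_diam[OF True] C_ge_1 by simp
    ultimately show ?thesis by simp
  qed
  moreover have "\<bar>u x\<bar> \<le> \<bar>u z\<bar>" using z(2) assms closure_subset by blast
  ultimately show ?thesis by linarith
qed

text \<open>Halving the distance to the frontier costs at most an additive \<open>C\<close> in the ratio
  \<open>\<bar>u\<bar> / bdist\<close>; this is where the logarithm comes from.\<close>
lemma abs_le_dyadic:
  assumes "y \<in> \<Omega>" "bdist y \<le> D / 2 ^ k"
  shows "\<bar>u y\<bar> \<le> (2 + real k) * C * (D / 2 ^ k)"
  using assms
proof (induction k arbitrary: y)
  case 0
  then show ?case using abs_le_diam by simp
next
  case (Suc k)
  define m where "m = (2 + real k) * C * (D / 2 ^ k)"
  have "0 \<le> m" using C_ge_1 diam_pos by (simp add: m_def)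
  moreover have "\<forall>y'\<in>\<Omega>. bdist y' \<le> 2 * bdist y \<longrightarrow> \<bar>u y'\<bar> \<le> m"
    using Suc by (auto simp: m_def)
  ultimately have "\<bar>u y\<bar> \<le> m / 2 + C * bdist y" by (rule abs_le_of_strip_bound[OF Suc.prems(1)])
  also have "\<dots> \<le> m / 2 + C * (D / 2 ^ Suc k)"
    using mult_left_mono[OF Suc.prems(2), of C] C_ge_1 by simp
  also have "\<dots> = (2 + real (Suc k)) * C * (D / 2 ^ Suc k)" by (simp add: m_def field_simps)
  finally show ?case .
qed

lemma abs_le_bdist_log:
  assumes x: "x \<in> \<Omega>"
  shows "\<bar>u x\<bar> \<le> 2 * C * bdist x * (2 + log 2 (D / bdist x))"
proof -
  define d where "d = bdist x"
  define k where "k = nat \<lfloor>log 2 (D / d)\<rfloor>"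
  have d: "0 < d" "d \<le> D" using bdist_pos[OF x] bdist_le_diam[OF x] by (simp_all add: d_def)
  then have "0 \<le> log 2 (D / d)" by simp
  then have k: "real k \<le> log 2 (D / d)" "log 2 (D / d) < real (Suc k)"
    by (simp_all add: k_def) linarith
  have "2 ^ k \<le> D / d" using k(1) d by (simp add: le_log_iff powr_realpow)
  then have "d \<le> D / 2 ^ k" using d by (simp add: field_simps)
  then have "\<bar>u x\<bar> \<le> (2 + real k) * C * (D / 2 ^ k)" using abs_le_dyadic x by (simp add: d_def)
  also have "\<dots> \<le> (2 + log 2 (D / d)) * C * (2 * d)"
  proof (intro mult_mono)
    have "D / d < 2 ^ Suc k" using k(2) d by (simp add: log_less_iff powr_add powr_realpow)
    then show "D / 2 ^ k \<le> 2 * d" using d by (simp add: field_simps)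
  qed (use k C_ge_1 d in auto)
  finally show ?thesis by (simp add: d_def algebra_simps)
qed

lemma abs_le_bdist_ln:
  assumes x: "x \<in> \<Omega>"
  shows "\<bar>u x\<bar> \<le> 2 * C * (2 + (1 + \<bar>ln D\<bar>) / ln 2) * bdist x * (1 + \<bar>ln (bdist x)\<bar>)"
proof -
  define d where "d = bdist x"
  have d: "0 < d" using bdist_pos[OF x] by (simp add: d_def)
  have "2 + log 2 (D / d) \<le> 2 + (\<bar>ln D\<bar> + \<bar>ln d\<bar>) / ln 2"
    using d diam_pos by (simp add: log_def ln_div divide_right_mono)
  also have "\<dots> \<le> (2 + (1 + \<bar>ln D\<bar>) / ln 2) * (1 + \<bar>ln d\<bar>)"
  proof -
    have "(2 + (1 + \<bar>ln D\<bar>) / ln 2) * (1 + \<bar>ln d\<bar>)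
        = 2 + (\<bar>ln D\<bar> + \<bar>ln d\<bar>) / ln 2 + (1 / ln 2 + 2 * \<bar>ln d\<bar> + \<bar>ln D\<bar> * \<bar>ln d\<bar> / ln 2)"
      by (simp add: field_simps)
    moreover have "0 \<le> 1 / ln 2 + 2 * \<bar>ln d\<bar> + \<bar>ln D\<bar> * \<bar>ln d\<bar> / ln 2" by simp
    ultimately show ?thesis by linarith
  qed
  finally have "2 + log 2 (D / d) \<le> (2 + (1 + \<bar>ln D\<bar>) / ln 2) * (1 + \<bar>ln d\<bar>)" .
  then have "2 * C * d * (2 + log 2 (D / d)) \<le> 2 * C * d * ((2 + (1 + \<bar>ln D\<bar>) / ln 2) * (1 + \<bar>ln d\<bar>))"
    using C_ge_1 d by (intro mult_left_mono) auto
  then show ?thesis using abs_le_bdist_log[OF x] by (simp add: d_def algebra_simps)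
qed

end
lemma exists_power_gt:
  fixes K :: real
  assumes "1 \<le> n"
  obtains C where "1 \<le> C" "K < C ^ n"
proof
  show "1 \<le> max 1 K + 1" by simp
  have "max 1 K + 1 \<le> (max 1 K + 1) ^ n" using assms by (simp add: self_le_power)
  then show "K < (max 1 K + 1) ^ n" by linarith
qed

theorem proposition1p3:
  fixes \<Omega> :: "'a::euclidean_space set" and M :: real
  assumes "DIM('a) \<ge> 2"
    and "open \<Omega>" and "convex \<Omega>" and "bounded \<Omega>" and "\<Omega> \<noteq> {}"
    and "M > 0"
  shows "\<exists>C>0. \<forall>u :: 'a \<Rightarrow> real.
           continuous_on (closure \<Omega>) u \<and> convex_on \<Omega> u \<and>
           (\<forall>x\<in>frontier \<Omega>. u x = 0) \<and>
           aleksandrov_det_le u \<Omega> (\<lambda>x. M * infdist x (frontier \<Omega>) ^ (DIM('a) - 2))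
           \<longrightarrow> (\<forall>x\<in>\<Omega>. \<bar>u x\<bar> \<le> C * infdist x (frontier \<Omega>) *
                          (1 + \<bar>ln (infdist x (frontier \<Omega>))\<bar>))"
proof -
  define D where "D = diameter (closure \<Omega>)"
  have diam: "\<forall>x\<in>closure \<Omega>. \<forall>y\<in>closure \<Omega>. dist x y \<le> D"
    using diameter_bounded_bound[OF bounded_closure[OF assms(4)]] by (simp add: D_def)
  obtain C where C: "1 \<le> C" "2 * (2 * real DIM('a)) ^ DIM('a) * M * 2 ^ (DIM('a) - 1) * 6 ^ DIM('a)
                                  * D ^ (2 * DIM('a) - 2) < C ^ DIM('a)"
    using exists_power_gt[of "DIM('a)"] DIM_positive by (metis One_nat_def Suc_leI)
  show ?thesis
  proof (intro exI conjI allI impI ballI)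
    show "0 < 2 * C * (2 + (1 + \<bar>ln D\<bar>) / ln 2)" using C(1) by (simp add: add_pos_nonneg)
    fix u x assume u: "continuous_on (closure \<Omega>) u \<and> convex_on \<Omega> u \<and> (\<forall>x\<in>frontier \<Omega>. u x = 0) \<and>
        aleksandrov_det_le u \<Omega> (\<lambda>x. M * infdist x (frontier \<Omega>) ^ (DIM('a) - 2))" and "x \<in> \<Omega>"
    interpret MA_boundary_estimate \<Omega> u M D C
      using assms u diam C by unfold_locales simp_all
    show "\<bar>u x\<bar> \<le> 2 * C * (2 + (1 + \<bar>ln D\<bar>) / ln 2) * bdist x * (1 + \<bar>ln (bdist x)\<bar>)"
      using abs_le_bdist_ln[OF \<open>x \<in> \<Omega>\<close>] .
  qed
qed

end
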